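(* There exists a finite constant $C=C(d)$ such that for any $\ell\in\mathbb N$ there exists a flow $\phi_\ell$ connecting the point mass at $0$ to $q_\ell$, with support contained in $\Lambda_{2\ell-1}$, such that \[ \sum_{z\in\mathbb Z^d,b\in\mathcal B}\phi_\ell(z;b)^2\le Cg_d(\ell),\qquad\sum_{z\in\mathbb Z^d,b\in\mathcal B}|\phi_\ell(z;b)|\le C\ell. \]
   Context: $\mathcal B=\{e_1,\dots,e_d\}$ is the canonical basis of $\mathbb Z^d$. $\Lambda_\ell=\{z\in\mathbb Z^d:0\le z_i\le\ell-1,\ i=1,\dots,d\}$; $p_\ell(z)=\ell^{-d}\mathbf 1(z\in\Lambda_\ell)$; $q_\ell=p_\ell*p_\ell$, i.e. $q_\ell(z)=\sum_yp_\ell(y)p_\ell(z-y)$. A flow is a function $\phi:\mathbb Z^d\times\mathcal B\to\mathbb R$; its support is contained in $\Lambda$ if $\phi(x;b)\ne0$ implies $\{x,x+b\}\subseteq\Lambda$. A flow $\phi$ connects a measure $p$ to a measure $q$ if $p(z)-q(z)=\sum_{b\in\mathcal B}\big(\phi(z;b)-\phi(z-b;b)\big)$ for all $z\in\mathbb Z^d$. $g_d(\ell)=\ell,\log\ell,1$ for $d=1$, $d=2$, $d\ge3$. *)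

theory Defs
  imports "HOL-Analysis.Analysis"
begin

text \<open>Points of Z^d are modelled as int ^ 'd for a finite index type 'd (d = CARD('d)).
  The canonical basis vector e_i is axis i 1; a flow is indexed by the basis index i :: 'd.\<close>

definition basis_vec :: "'d::finite \<Rightarrow> int ^ 'd" where
  "basis_vec i = axis i 1"

definition Lam :: "nat \<Rightarrow> (int ^ 'd::finite) set" where
  "Lam l = {z. \<forall>i. 0 \<le> z $ i \<and> z $ i \<le> int l - 1}"

definition punif :: "nat \<Rightarrow> int ^ 'd::finite \<Rightarrow> real" where
  "punif l z = (if z \<in> Lam l then 1 / real l ^ CARD('d) else 0)"

definition qconv :: "nat \<Rightarrow> int ^ 'd::finite \<Rightarrow> real" where
  "qconv l z = (\<Sum>y\<in>Lam l. punif l y * punif l (z - y))"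

definition point_mass :: "int ^ 'd::finite \<Rightarrow> real" where
  "point_mass z = (if z = 0 then 1 else 0)"

definition flow_supported_in :: "(int ^ 'd::finite \<Rightarrow> 'd \<Rightarrow> real) \<Rightarrow> (int ^ 'd) set \<Rightarrow> bool" where
  "flow_supported_in \<phi> \<Lambda> \<longleftrightarrow>
     (\<forall>x b. \<phi> x b \<noteq> 0 \<longrightarrow> x \<in> \<Lambda> \<and> x + basis_vec b \<in> \<Lambda>)"

definition flow_connects :: "(int ^ 'd::finite \<Rightarrow> 'd \<Rightarrow> real) \<Rightarrow> (int ^ 'd \<Rightarrow> real) \<Rightarrow> (int ^ 'd \<Rightarrow> real) \<Rightarrow> bool" where
  "flow_connects \<phi> p q \<longleftrightarrow>
     (\<forall>z. p z - q z = (\<Sum>b\<in>UNIV. \<phi> z b - \<phi> (z - basis_vec b) b))"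

definition g_d :: "nat \<Rightarrow> nat \<Rightarrow> real" where
  "g_d d l = (if d = 1 then real l else if d = 2 then ln (real l) else 1)"

end

theory Submission
  imports Defs
begin

text \<open>
  q_t is the product over the coordinates of the one-dimensional triangular law tri t, the law
  of the sum of two independent uniform variables on {0..t-1}; in particular q_1 is the point
  mass at 0. The flow is the sum over 1 \<le> t < l of flows \<Phi>_t (step_flow) connecting q_t to
  q_(t+1). In one dimension, tri t - tri (t+1) is the discrete derivative of its running sum
  tri_flow t, which lives on [0, 2t-1] and is bounded by 6/t because every point mass changes
  by O(1/t^2). Replacing the coordinate laws of q_t by those of q_(t+1) one at a time, the
  replacement of coordinate b is carried by tri_flow t (z_b) times a product of
  one-dimensional laws, hence |\<Phi>_t| \<le> 6 t^(-d) and ||\<Phi>_t||_1 \<le> 12 d. For the energy, (\<Sum>_t a_t)^2 \<le> 2 \<Sum>_(s \<le> t) a_s a_t pairs the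
  l^1 norm of \<Phi>_s with the sup norm of \<Phi>_t, so the energy is
  O(d \<Sum>_(t<l) t^(1-d)) = O(d g_d(l)).
\<close>

section \<open>One-dimensional triangular laws\<close>

definition sum_reps :: "nat \<Rightarrow> int \<Rightarrow> int set" where
  "sum_reps t k = {y \<in> {0..int t - 1}. k - y \<in> {0..int t - 1}}"

definition tri :: "nat \<Rightarrow> int \<Rightarrow> real" where
  "tri t k = real (card (sum_reps t k)) / (real t)\<^sup>2"

definition tri_flow :: "nat \<Rightarrow> int \<Rightarrow> real" where
  "tri_flow t k = (\<Sum>j\<in>{0..k}. tri t j - tri (Suc t) j)"

lemma finite_sum_reps [simp]: "finite (sum_reps t k)"
  unfolding sum_reps_def by (rule finite_subset [of _ "{0..int t - 1}"]) auto

lemma card_sum_reps_le: "card (sum_reps t k) \<le> t"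
proof -
  have "card (sum_reps t k) \<le> card {0..int t - 1}"
    unfolding sum_reps_def by (intro card_mono) auto
  then show ?thesis by simp
qed

lemma card_sum_reps_mono: "card (sum_reps t k) \<le> card (sum_reps (Suc t) k)"
  by (intro card_mono finite_sum_reps) (auto simp: sum_reps_def)

lemma card_sum_reps_Suc_le: "card (sum_reps (Suc t) k) \<le> card (sum_reps t k) + 2"
proof -
  have "sum_reps (Suc t) k \<subseteq> insert (int t) (insert (k - int t) (sum_reps t k))"
    unfolding sum_reps_def by auto
  then have "card (sum_reps (Suc t) k) \<le> card (insert (int t) (insert (k - int t) (sum_reps t k)))"
    by (intro card_mono) auto
  also have "\<dots> \<le> card (sum_reps t k) + 2"
    by (simp add: card_insert_if)
  finally show ?thesis .
qed

lemma card_sum_reps_eq_sum: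
  "real (card (sum_reps t k)) = (\<Sum>y\<in>{0..int t - 1}. of_bool (k - y \<in> {0..int t - 1}))"
  by (simp add: sum_reps_def Int_def)

lemma tri_nonneg: "0 \<le> tri t k"
  by (simp add: tri_def)

lemma tri_le: "t \<ge> 1 \<Longrightarrow> tri t k \<le> 1 / real t"
  using card_sum_reps_le[of t k]
  by (simp add: tri_def power2_eq_square divide_simps)

lemma tri_eq_0:
  assumes "k < 0 \<or> 2 * int t - 2 < k"
  shows "tri t k = 0"
proof -
  have "sum_reps t k = {}"
    using assms by (auto simp: sum_reps_def)
  then show ?thesis by (simp add: tri_def)
qed

lemma tri_1: "tri 1 k = of_bool (k = 0)"
proof -
  have "sum_reps 1 k = (if k = 0 then {0} else {})"
    unfolding sum_reps_def by auto
  then show ?thesis by (simp add: tri_def)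
qed

lemma sum_tri:
  assumes "t \<ge> 1" "finite K" "{0..2 * int t - 2} \<subseteq> K"
  shows "(\<Sum>k\<in>K. tri t k) = 1"
proof -
  have "(\<Sum>k\<in>K. real (card (sum_reps t k)))
      = (\<Sum>y\<in>{0..int t - 1}. \<Sum>k\<in>K. of_bool (k - y \<in> {0..int t - 1}))"
    unfolding card_sum_reps_eq_sum by (rule sum.swap)
  also have "\<dots> = (\<Sum>y\<in>{0..int t - 1}. real t)"
  proof (rule sum.cong [OF refl])
    fix y assume "y \<in> {0..int t - 1}"
    then have "K \<inter> {k. k - y \<in> {0..int t - 1}} = {y..y + int t - 1}"
      using assms(3) by auto
    then show "(\<Sum>k\<in>K. of_bool (k - y \<in> {0..int t - 1})) = real t"
      using assms(2) by simp
  qed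
  finally show ?thesis
    using assms(1) by (simp add: tri_def power2_eq_square flip: sum_divide_distrib)
qed

lemma sum_tri_le_1:
  assumes "t \<ge> 1" "finite K"
  shows "(\<Sum>k\<in>K. tri t k) \<le> 1"
proof -
  have "(\<Sum>k\<in>K. tri t k) \<le> (\<Sum>k\<in>K \<union> {0..2 * int t - 2}. tri t k)"
    using assms(2) by (intro sum_mono2) (auto simp: tri_nonneg)
  also have "\<dots> = 1"
    using assms by (intro sum_tri) auto
  finally show ?thesis .
qed

lemma abs_tri_diff_le:
  assumes "t \<ge> 1"
  shows "\<bar>tri t k - tri (Suc t) k\<bar> \<le> 2 / (real t)\<^sup>2"
proof -
  define T where "T = real t"
  define c where "c = real (card (sum_reps t k))"
  define c' where "c' = real (card (sum_reps (Suc t) k))"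
  have T: "1 \<le> T" and c: "0 \<le> c" "c \<le> T" "c \<le> c'" "c' \<le> c + 2"
    using assms card_sum_reps_le[of t k] card_sum_reps_mono[of t k] card_sum_reps_Suc_le[of t k]
    by (simp_all add: T_def c_def c'_def)
  \<comment> \<open>Split the difference into the effect of the larger normalisation and of the new pairs.\<close>
  define A where "A = c / T\<^sup>2 - c / (T + 1)\<^sup>2"
  define B where "B = (c' - c) / (T + 1)\<^sup>2"
  have "tri t k - tri (Suc t) k = c / T\<^sup>2 - c' / (T + 1)\<^sup>2"
    by (simp add: tri_def T_def c_def c'_def add.commute)
  also have "\<dots> = A - B"
    by (simp add: A_def B_def diff_divide_distrib)
  finally have "tri t k - tri (Suc t) k = A - B" .
  moreover have "0 \<le> A" "A \<le> 2 / T\<^sup>2"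
  proof -
    have A: "A = c * (2 * T + 1) / (T\<^sup>2 * (T + 1)\<^sup>2)"
      using T by (simp add: A_def divide_simps) (simp add: power2_eq_square algebra_simps)
    show "0 \<le> A"
      using T c by (simp add: A)
    have "c * (2 * T + 1) \<le> T * (2 * T + 1)"
      using T c by (intro mult_right_mono) auto
    also have "\<dots> \<le> 2 * (T + 1)\<^sup>2"
      using T by (simp add: power2_eq_square algebra_simps)
    finally show "A \<le> 2 / T\<^sup>2"
      using T by (simp add: A divide_simps mult.commute)
  qed
  moreover have "0 \<le> B" "B \<le> 2 / T\<^sup>2"
  proof -
    show "0 \<le> B" using c by (simp add: B_def)
    have "B \<le> 2 / (T + 1)\<^sup>2"
      using c by (simp add: B_def divide_right_mono)
    also have "\<dots> \<le> 2 / T\<^sup>2"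
      using T by (intro divide_left_mono power_mono) auto
    finally show "B \<le> 2 / T\<^sup>2" .
  qed
  ultimately show ?thesis
    by (simp add: T_def abs_le_iff)
qed

lemma tri_flow_diff: "tri_flow t k - tri_flow t (k - 1) = tri t k - tri (Suc t) k"
proof (cases "k \<ge> 0")
  case True
  then have "{0..k} = insert k {0..k - 1}" by auto
  then show ?thesis by (simp add: tri_flow_def)
next
  case False
  then show ?thesis by (simp add: tri_flow_def tri_eq_0)
qed

lemma tri_flow_eq_0:
  assumes "t \<ge> 1" "k < 0 \<or> 2 * int t \<le> k"
  shows "tri_flow t k = 0"
  using assms sum_tri[of t "{0..k}"] sum_tri[of "Suc t" "{0..k}"]
  by (auto simp: tri_flow_def sum_subtractf)

lemma abs_tri_flow_le:
  assumes "t \<ge> 1"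
  shows "\<bar>tri_flow t k\<bar> \<le> 6 / real t"
proof -
  have "\<bar>tri_flow t k\<bar> \<le> (\<Sum>j\<in>{0..k}. \<bar>tri t j - tri (Suc t) j\<bar>)"
    unfolding tri_flow_def by (rule sum_abs)
  also have "\<dots> = (\<Sum>j\<in>{0..k} \<inter> {0..2 * int t}. \<bar>tri t j - tri (Suc t) j\<bar>)"
    by (rule sum.mono_neutral_right) (auto simp: tri_eq_0)
  also have "\<dots> \<le> (\<Sum>j\<in>{0..2 * int t}. \<bar>tri t j - tri (Suc t) j\<bar>)"
    by (rule sum_mono2) auto
  also have "\<dots> \<le> (\<Sum>j\<in>{0..2 * int t}. 2 / (real t)\<^sup>2)"
    by (intro sum_mono abs_tri_diff_le assms)
  also have "\<dots> = real (2 * t + 1) * 2 / (real t)\<^sup>2"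
    by simp
  also have "\<dots> \<le> 6 / real t"
    using assms by (simp add: divide_simps power2_eq_square)
  finally show ?thesis .
qed

lemma sum_abs_tri_flow_le:
  assumes "t \<ge> 1" "finite K"
  shows "(\<Sum>k\<in>K. \<bar>tri_flow t k\<bar>) \<le> 12"
proof -
  have "(\<Sum>k\<in>K. \<bar>tri_flow t k\<bar>) = (\<Sum>k\<in>K \<inter> {0..2 * int t - 1}. \<bar>tri_flow t k\<bar>)"
    using assms by (intro sum.mono_neutral_right ballI) (auto intro!: tri_flow_eq_0)
  also have "\<dots> \<le> (\<Sum>k\<in>{0..2 * int t - 1}. \<bar>tri_flow t k\<bar>)"
    by (rule sum_mono2) auto
  also have "\<dots> \<le> (\<Sum>k\<in>{0..2 * int t - 1}. 6 / real t)"
    by (intro sum_mono abs_tri_flow_le assms)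
  also have "\<dots> = 12"
    using assms by simp
  finally show ?thesis .
qed

lemma tri_nonzero_imp: "tri t k \<noteq> 0 \<Longrightarrow> 0 \<le> k \<and> k \<le> 2 * int t - 2"
  using tri_eq_0 by force

lemma tri_flow_nonzero_imp: "t \<ge> 1 \<Longrightarrow> tri_flow t k \<noteq> 0 \<Longrightarrow> 0 \<le> k \<and> k \<le> 2 * int t - 1"
  using tri_flow_eq_0[of t k] by (auto simp: not_less[symmetric])

section \<open>Products over coordinates\<close>

lemma prod_of_bool:
  assumes "finite A"
  shows "(\<Prod>i\<in>A. of_bool (P i) :: 'a::comm_semiring_1) = of_bool (\<forall>i\<in>A. P i)"
proof (cases "\<forall>i\<in>A. P i")
  case False
  then show ?thesis using assms by (auto intro!: prod_zero)
qed simp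

lemma prod_diff_single:
  fixes f g :: "'a \<Rightarrow> 'b::comm_ring_1"
  assumes "finite A" "b \<in> A" "\<And>i. i \<in> A \<Longrightarrow> i \<noteq> b \<Longrightarrow> f i = g i"
  shows "prod f A - prod g A = (f b - g b) * prod f (A - {b})"
proof -
  have "prod g (A - {b}) = prod f (A - {b})"
    using assms(3) by (intro prod.cong) auto
  then show ?thesis
    using assms(1,2) by (simp add: prod.remove algebra_simps)
qed

lemma prod_diff_telescoping:
  fixes x y :: "'a \<Rightarrow> 'b::comm_ring_1" and r :: "'a \<Rightarrow> 'c::linorder"
  assumes "finite S" "inj_on r S"
  shows "prod y S - prod x S
    = (\<Sum>b\<in>S. (y b - x b) * (\<Prod>i\<in>S - {b}. if r i < r b then x i else y i))"
  using assms
proof (induction S rule: finite_ranking_induct [where f = r])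
  case empty
  then show ?case by simp
next
  case (insert m S)
  show ?case
  proof (cases "m \<in> S")
    case True
    then show ?thesis using insert by (simp add: insert_absorb)
  next
    case False
    have below_m: "r i < r m" if "i \<in> S" for i
      using insert.hyps(2)[OF that] insert.prems False that
      by (metis inj_on_contraD insertCI order.not_eq_order_implies_strict)
    have "(\<Prod>i\<in>insert m S - {m}. if r i < r m then x i else y i) = prod x S"
      using False below_m by (intro prod.cong) auto
    moreover have "(\<Prod>i\<in>insert m S - {b}. if r i < r b then x i else y i)
        = y m * (\<Prod>i\<in>S - {b}. if r i < r b then x i else y i)" if "b \<in> S" for b
    proof -
      have "insert m S - {b} = insert m (S - {b})" "m \<notin> S - {b}" "\<not> r m < r b"
        using that False below_m[OF that] by auto
      then show ?thesis using insert.hyps(1) by simp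
    qed
    moreover have "inj_on r S"
      using insert.prems by (rule inj_on_subset) auto
    ultimately show ?thesis
      using False insert.hyps(1) insert.IH
      by (simp add: algebra_simps sum_distrib_left)
  qed
qed

lemma bij_betw_Lam_PiE:
  "bij_betw vec_nth (Lam M :: (int ^ 'd::finite) set) (PiE UNIV (\<lambda>_. {0..int M - 1}))"
  by (rule bij_betwI [where g = vec_lambda]) (auto simp: Lam_def)

lemma finite_Lam [simp]: "finite (Lam M :: (int ^ 'd::finite) set)"
  using bij_betw_finite [OF bij_betw_Lam_PiE] by (simp add: finite_PiE)

lemma sum_Lam_prod:
  fixes f :: "'d::finite \<Rightarrow> int \<Rightarrow> 'a::comm_semiring_1"
  shows "(\<Sum>z\<in>Lam M. \<Prod>i\<in>UNIV. f i (z $ i)) = (\<Prod>i\<in>UNIV. \<Sum>k\<in>{0..int M - 1}. f i k)"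
proof -
  have "(\<Prod>i\<in>UNIV. \<Sum>k\<in>{0..int M - 1}. f i k)
      = (\<Sum>g\<in>PiE UNIV (\<lambda>_. {0..int M - 1}). \<Prod>i\<in>UNIV. f i (g i))"
    by (rule prod_sum_PiE) auto
  also have "\<dots> = (\<Sum>z\<in>Lam M. \<Prod>i\<in>UNIV. f i (z $ i))"
    by (rule sum.reindex_bij_betw [OF bij_betw_Lam_PiE, symmetric])
  finally show ?thesis by simp
qed

section \<open>The interpolating flow\<close>

definition qprod :: "nat \<Rightarrow> int ^ 'd::finite \<Rightarrow> real" where
  "qprod t z = (\<Prod>i\<in>UNIV. tri t (z $ i))"

lemma point_mass_eq_qprod_1: "point_mass = qprod 1"
  unfolding qprod_def tri_1 by (simp add: fun_eq_iff point_mass_def prod_of_bool vec_eq_iff)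

lemma qconv_eq_qprod:
  assumes "l \<ge> 1"
  shows "qconv l = qprod l"
proof
  fix z :: "int ^ 'd"
  define h where "h i k = of_bool (z $ i - k \<in> {0..int l - 1}) / (real l)\<^sup>2" for i k
  have "punif l y * punif l (z - y) = (\<Prod>i\<in>UNIV. h i (y $ i))" if "y \<in> Lam l" for y
  proof -
    have "(\<Prod>i\<in>UNIV. h i (y $ i)) = of_bool (z - y \<in> Lam l) / ((real l)\<^sup>2) ^ CARD('d)"
      by (simp add: h_def prod_dividef prod_of_bool Lam_def)
    then show ?thesis
      using that by (simp add: punif_def power_mult_distrib mult_2 power_add flip: power_mult)
  qed
  then have "qconv l z = (\<Sum>y\<in>Lam l. \<Prod>i\<in>UNIV. h i (y $ i))"
    by (simp add: qconv_def)
  also have "\<dots> = (\<Prod>i\<in>UNIV. \<Sum>k\<in>{0..int l - 1}. h i k)"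
    by (rule sum_Lam_prod)
  also have "\<dots> = qprod l z"
    by (simp add: qprod_def tri_def sum_reps_def h_def Int_def flip: sum_divide_distrib)
  finally show "qconv l z = qprod l z" .
qed

text \<open>The ranking r orders the coordinates: those ranked below b already carry tri (t+1),
  those ranked above still carry tri t, so summing over b telescopes (prod_diff_telescoping).\<close>

definition step_factor :: "('d::finite \<Rightarrow> nat) \<Rightarrow> nat \<Rightarrow> 'd \<Rightarrow> 'd \<Rightarrow> int \<Rightarrow> real" where
  "step_factor r t b i k =
     (if i = b then tri_flow t k else if r i < r b then tri (Suc t) k else tri t k)"

definition step_flow :: "('d::finite \<Rightarrow> nat) \<Rightarrow> nat \<Rightarrow> int ^ 'd \<Rightarrow> 'd \<Rightarrow> real" where
  "step_flow r t z b = (\<Prod>i\<in>UNIV. step_factor r t b i (z $ i))"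

definition interp_flow :: "('d::finite \<Rightarrow> nat) \<Rightarrow> nat \<Rightarrow> int ^ 'd \<Rightarrow> 'd \<Rightarrow> real" where
  "interp_flow r l z b = (\<Sum>t\<in>{1..<l}. step_flow r t z b)"

lemma basis_vec_nth: "basis_vec b $ i = of_bool (i = b)"
  by (simp add: basis_vec_def axis_def)

lemma step_flow_divergence:
  assumes "inj r"
  shows "(\<Sum>b\<in>UNIV. step_flow r t z b - step_flow r t (z - basis_vec b) b)
    = qprod t z - qprod (Suc t) z"
proof -
  have "step_flow r t z b - step_flow r t (z - basis_vec b) b
      = (tri t (z $ b) - tri (Suc t) (z $ b))
        * (\<Prod>i\<in>UNIV - {b}. if r i < r b then tri (Suc t) (z $ i) else tri t (z $ i))" for b
    unfolding step_flow_def
    by (subst prod_diff_single [where b = b])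
       (auto simp: basis_vec_nth step_factor_def tri_flow_diff intro!: prod.cong)
  then show ?thesis
    using prod_diff_telescoping [of UNIV r "\<lambda>i. tri t (z $ i)" "\<lambda>i. tri (Suc t) (z $ i)"] assms
    by (simp add: qprod_def)
qed

lemma interp_flow_connects:
  fixes r :: "'d::finite \<Rightarrow> nat"
  assumes "inj r" "l \<ge> 1"
  shows "flow_connects (interp_flow r l) point_mass (qconv l)"
  unfolding flow_connects_def
proof
  fix z :: "int ^ 'd"
  have "(\<Sum>b\<in>UNIV. interp_flow r l z b - interp_flow r l (z - basis_vec b) b)
      = (\<Sum>t\<in>{1..<l}. \<Sum>b\<in>UNIV. step_flow r t z b - step_flow r t (z - basis_vec b) b)"
    unfolding interp_flow_def by (subst sum.swap) (simp add: sum_subtractf)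
  also have "\<dots> = (\<Sum>t\<in>{1..<l}. qprod t z - qprod (Suc t) z)"
    by (simp add: step_flow_divergence assms(1))
  also have "\<dots> = qprod 1 z - qprod l z"
    using sum_Suc_diff' [OF assms(2), of "\<lambda>t. - qprod t z"] by (simp add: sum_negf)
  finally show "point_mass z - qconv l z
      = (\<Sum>b\<in>UNIV. interp_flow r l z b - interp_flow r l (z - basis_vec b) b)"
    by (simp add: point_mass_eq_qprod_1 qconv_eq_qprod [OF assms(2)])
qed

lemma step_flow_nonzero_imp:
  assumes "step_flow r t z b \<noteq> 0" "1 \<le> t" "t < l"
  shows "z \<in> Lam (2 * l - 1) \<and> z + basis_vec b \<in> Lam (2 * l - 1)"
proof -
  have bound: "0 \<le> z $ i \<and> z $ i + of_bool (i = b) \<le> 2 * int t" for i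
  proof -
    have "step_factor r t b i (z $ i) \<noteq> 0"
      using assms(1) by (simp add: step_flow_def)
    then show ?thesis
      using tri_nonzero_imp [of "Suc t" "z $ i"] tri_nonzero_imp [of t "z $ i"]
      tri_flow_nonzero_imp [OF assms(2), of "z $ i"]
      by (auto simp: step_factor_def split: if_splits)
  qed
  have "0 \<le> z $ i \<and> z $ i \<le> int (2 * l - 1) - 1
      \<and> 0 \<le> (z + basis_vec b) $ i \<and> (z + basis_vec b) $ i \<le> int (2 * l - 1) - 1" for i
    using bound [of i] assms(3) by (cases "i = b") (auto simp: basis_vec_nth)
  then show ?thesis
    by (simp add: Lam_def)
qed

lemma interp_flow_supported:
  "flow_supported_in (interp_flow r l) (Lam (2 * l - 1))"
  unfolding flow_supported_in_def
proof (intro allI impI)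
  fix z b assume "interp_flow r l z b \<noteq> 0"
  then obtain t where "t \<in> {1..<l}" "step_flow r t z b \<noteq> 0"
    unfolding interp_flow_def by (meson sum.neutral)
  then show "z \<in> Lam (2 * l - 1) \<and> z + basis_vec b \<in> Lam (2 * l - 1)"
    by (intro step_flow_nonzero_imp [of r t]) auto
qed

lemma abs_step_flow_le:
  fixes r :: "'d::finite \<Rightarrow> nat"
  assumes "t \<ge> 1"
  shows "\<bar>step_flow r t z b\<bar> \<le> 6 / real t ^ CARD('d)"
proof -
  define c where "c i = (if i = b then 6 / real t else 1 / real t)" for i :: 'd
  have tri_Suc_le: "tri (Suc t) k \<le> 1 / real t" for k
    using tri_le [of "Suc t" k] assms by (simp add: frac_le order_trans)
  have "\<bar>step_flow r t z b\<bar> = (\<Prod>i\<in>UNIV. \<bar>step_factor r t b i (z $ i)\<bar>)"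
    by (simp add: step_flow_def abs_prod)
  also have "\<dots> \<le> (\<Prod>i\<in>UNIV. c i)"
    using abs_tri_flow_le [OF assms] tri_le [OF assms] tri_Suc_le
    by (intro prod_mono) (auto simp: step_factor_def c_def tri_nonneg)
  also have "\<dots> = 6 / real t * (1 / real t) ^ (CARD('d) - 1)"
    by (simp add: prod.remove [of UNIV b] c_def card_Diff_singleton)
  also have "\<dots> = 6 / real t ^ CARD('d)"
    using finite_UNIV_card_ge_0 [where 'a = 'd]
    by (cases "CARD('d)") (simp_all add: power_one_over)
  finally show ?thesis .
qed

lemma sum_abs_step_flow_le:
  assumes "t \<ge> 1"
  shows "(\<Sum>z\<in>Lam M. \<bar>step_flow r t z b\<bar>) \<le> 12"
proof -
  have "(\<Sum>z\<in>Lam M. \<bar>step_flow r t z b\<bar>)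
      = (\<Prod>i\<in>UNIV. \<Sum>k\<in>{0..int M - 1}. \<bar>step_factor r t b i k\<bar>)"
    unfolding step_flow_def abs_prod by (rule sum_Lam_prod)
  also have "\<dots> \<le> (\<Prod>i\<in>UNIV. if i = b then 12 else 1)"
  proof (rule prod_mono)
    fix i
    have "(\<Sum>k\<in>{0..int M - 1}. \<bar>step_factor r t b i k\<bar>) \<le> (if i = b then 12 else 1)"
    proof (cases "i = b")
      case True
      then show ?thesis using sum_abs_tri_flow_le [OF assms] by (simp add: step_factor_def)
    next
      case False
      then show ?thesis
        using assms by (cases "r i < r b") (simp_all add: step_factor_def tri_nonneg sum_tri_le_1)
    qed
    then show "0 \<le> (\<Sum>k\<in>{0..int M - 1}. \<bar>step_factor r t b i k\<bar>)
        \<and> (\<Sum>k\<in>{0..int M - 1}. \<bar>step_factor r t b i k\<bar>) \<le> (if i = b then 12 else 1)"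
      by (simp add: sum_nonneg)
  qed
  also have "\<dots> = 12"
    by simp
  finally show ?thesis .
qed

lemma sum_abs_step_flow_pairs_le:
  fixes r :: "'d::finite \<Rightarrow> nat"
  assumes "t \<ge> 1"
  shows "(\<Sum>(z, b)\<in>Lam M \<times> UNIV. \<bar>step_flow r t z b\<bar>) \<le> 12 * real CARD('d)"
proof -
  have "(\<Sum>(z, b)\<in>Lam M \<times> UNIV. \<bar>step_flow r t z b\<bar>)
      = (\<Sum>b\<in>UNIV. \<Sum>z\<in>Lam M. \<bar>step_flow r t z b\<bar>)"
    by (simp add: sum.cartesian_product [symmetric] sum.swap [of _ "Lam M"])
  also have "\<dots> \<le> (\<Sum>b\<in>(UNIV :: 'd set). 12)"
    by (intro sum_mono sum_abs_step_flow_le assms)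
  finally show ?thesis by simp
qed

section \<open>Energy and l^1 bounds\<close>

lemma square_sum_le_ordered_pairs:
  fixes a :: "'i::linorder \<Rightarrow> real"
  assumes "finite T" "\<And>t. t \<in> T \<Longrightarrow> 0 \<le> a t"
  shows "(\<Sum>t\<in>T. a t)\<^sup>2 \<le> 2 * (\<Sum>t\<in>T. a t * (\<Sum>s\<in>{s\<in>T. s \<le> t}. a s))"
proof -
  define P where "P = (\<Sum>t\<in>T. \<Sum>s\<in>T. if s \<le> t then a t * a s else 0)"
  have "(\<Sum>t\<in>T. a t)\<^sup>2 = (\<Sum>t\<in>T. \<Sum>s\<in>T. a t * a s)"
    by (simp add: power2_eq_square sum_product)
  also have "\<dots> \<le> (\<Sum>t\<in>T. \<Sum>s\<in>T.
      (if s \<le> t then a t * a s else 0) + (if t \<le> s then a t * a s else 0))"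
    using assms(2) by (intro sum_mono) auto
  also have "\<dots> = P + (\<Sum>t\<in>T. \<Sum>s\<in>T. if t \<le> s then a t * a s else 0)"
    by (simp add: P_def sum.distrib)
  also have "(\<Sum>t\<in>T. \<Sum>s\<in>T. if t \<le> s then a t * a s else 0) = P"
    unfolding P_def by (subst sum.swap) (auto intro!: sum.cong simp: mult.commute)
  also have "P = (\<Sum>t\<in>T. a t * (\<Sum>s\<in>{s\<in>T. s \<le> t}. a s))"
    using assms(1) by (simp add: P_def sum_distrib_left flip: sum.inter_filter)
  finally show ?thesis by simp
qed

lemma sum_square_sum_le:
  fixes F :: "'i::linorder \<Rightarrow> 'a \<Rightarrow> real"
  assumes "finite X" "finite T"
    and "\<And>t. t \<in> T \<Longrightarrow> 0 \<le> M t"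
    and "\<And>t x. t \<in> T \<Longrightarrow> x \<in> X \<Longrightarrow> \<bar>F t x\<bar> \<le> M t"
    and "\<And>t. t \<in> T \<Longrightarrow> (\<Sum>x\<in>X. \<bar>F t x\<bar>) \<le> W"
  shows "(\<Sum>x\<in>X. (\<Sum>t\<in>T. F t x)\<^sup>2) \<le> 2 * W * (\<Sum>t\<in>T. real (card {s\<in>T. s \<le> t}) * M t)"
proof -
  have "(\<Sum>x\<in>X. (\<Sum>t\<in>T. F t x)\<^sup>2) \<le> (\<Sum>x\<in>X. (\<Sum>t\<in>T. \<bar>F t x\<bar>)\<^sup>2)"
    by (intro sum_mono) (metis power2_abs power_mono sum_abs abs_ge_zero)
  also have "\<dots> \<le> (\<Sum>x\<in>X. 2 * (\<Sum>t\<in>T. \<bar>F t x\<bar> * (\<Sum>s\<in>{s\<in>T. s \<le> t}. \<bar>F s x\<bar>)))"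
    using assms(2) by (intro sum_mono square_sum_le_ordered_pairs) auto
  also have "\<dots> \<le> (\<Sum>x\<in>X. 2 * (\<Sum>t\<in>T. M t * (\<Sum>s\<in>{s\<in>T. s \<le> t}. \<bar>F s x\<bar>)))"
    using assms(4) by (intro sum_mono mult_left_mono mult_right_mono sum_nonneg) auto
  also have "\<dots> = 2 * (\<Sum>t\<in>T. M t * (\<Sum>s\<in>{s\<in>T. s \<le> t}. \<Sum>x\<in>X. \<bar>F s x\<bar>))"
    by (simp add: sum_distrib_left sum.swap [of _ X])
  also have "\<dots> \<le> 2 * (\<Sum>t\<in>T. M t * (\<Sum>s\<in>{s\<in>T. s \<le> t}. W))"
    using assms(3,5) by (intro mult_left_mono sum_mono) auto
  also have "\<dots> = 2 * W * (\<Sum>t\<in>T. real (card {s\<in>T. s \<le> t}) * M t)"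
    by (simp add: sum_distrib_left mult_ac)
  finally show ?thesis .
qed

lemma inverse_le_ln_increment:
  assumes "t \<ge> 1"
  shows "1 / real t \<le> 2 * (ln (real (Suc t)) - ln (real t))"
proof -
  have "ln (real t / real (Suc t)) \<le> real t / real (Suc t) - 1"
    using assms by (intro ln_le_minus_one) auto
  then have "1 / (real t + 1) \<le> ln (real (Suc t)) - ln (real t)"
    using assms by (simp add: ln_div field_simps)
  moreover have "1 / real t \<le> 2 / (real t + 1)"
    using assms by (simp add: divide_simps)
  ultimately show ?thesis by simp
qed

lemma inverse_square_le_increment:
  assumes "t \<ge> 1"
  shows "1 / (real t)\<^sup>2 \<le> 2 * (1 / real t - 1 / real (Suc t))"
  using assms by (simp add: divide_simps power2_eq_square)

lemma sum_div_power_le_g_d: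
  assumes "d \<ge> 1" "l \<ge> 1"
  shows "(\<Sum>t\<in>{1..<l}. real t / real t ^ d) \<le> 2 * g_d d l"
proof -
  consider "d = 1" | "d = 2" | "d \<ge> 3" using assms(1) by linarith
  then show ?thesis
  proof cases
    case 1
    then show ?thesis using assms(2) by (simp add: g_d_def)
  next
    case 2
    have "(\<Sum>t\<in>{1..<l}. real t / real t ^ d)
        \<le> (\<Sum>t\<in>{1..<l}. 2 * (ln (real (Suc t)) - ln (real t)))"
      using inverse_le_ln_increment 2 by (intro sum_mono) (simp add: power2_eq_square)
    also have "\<dots> = 2 * (\<Sum>t\<in>{1..<l}. ln (real (Suc t)) - ln (real t))"
      by (simp add: sum_distrib_left)
    also have "\<dots> = 2 * ln (real l)"
      using sum_Suc_diff' [OF assms(2), of "\<lambda>t. ln (real t)"] by simp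
    finally show ?thesis using 2 by (simp add: g_d_def)
  next
    case 3
    have "real t / real t ^ d \<le> 1 / (real t)\<^sup>2" if "t \<ge> 1" for t
    proof -
      have "real t ^ 3 \<le> real t ^ d"
        using that 3 by (intro power_increasing) auto
      then show ?thesis
        using that by (simp add: field_simps power2_eq_square power3_eq_cube)
    qed
    then have "(\<Sum>t\<in>{1..<l}. real t / real t ^ d)
        \<le> (\<Sum>t\<in>{1..<l}. 2 * (1 / real t - 1 / real (Suc t)))"
      using inverse_square_le_increment by (intro sum_mono) (meson atLeastLessThan_iff order_trans)
    also have "\<dots> = 2 * (\<Sum>t\<in>{1..<l}. (- 1 / real (Suc t)) - (- 1 / real t))"
      by (simp add: sum_distrib_left)
    also have "\<dots> = 2 * (1 - 1 / real l)"
      using sum_Suc_diff' [OF assms(2), of "\<lambda>t. - 1 / real t"] by simp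
    also have "\<dots> \<le> 2"
      by simp
    finally show ?thesis using 3 by (simp add: g_d_def)
  qed
qed

lemma interp_flow_energy:
  fixes r :: "'d::finite \<Rightarrow> nat"
  assumes "l \<ge> 1"
  shows "(\<Sum>(z, b)\<in>Lam (2 * l - 1) \<times> UNIV. (interp_flow r l z b)\<^sup>2)
    \<le> 288 * real CARD('d) * g_d CARD('d) l"
proof -
  let ?X = "Lam (2 * l - 1) \<times> (UNIV :: 'd set)"
  let ?T = "{1..<l}"
  let ?F = "\<lambda>t (z, b). step_flow r t z b"
  have "(\<Sum>(z, b)\<in>?X. (interp_flow r l z b)\<^sup>2) = (\<Sum>x\<in>?X. (\<Sum>t\<in>?T. ?F t x)\<^sup>2)"
    by (simp add: interp_flow_def case_prod_beta)
  also have "\<dots> \<le> 2 * (12 * real CARD('d))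
      * (\<Sum>t\<in>?T. real (card {s\<in>?T. s \<le> t}) * (6 / real t ^ CARD('d)))"
    using abs_step_flow_le sum_abs_step_flow_pairs_le
    by (intro sum_square_sum_le) (auto simp: case_prod_beta)
  also have "(\<Sum>t\<in>?T. real (card {s\<in>?T. s \<le> t}) * (6 / real t ^ CARD('d)))
      = 6 * (\<Sum>t\<in>?T. real t / real t ^ CARD('d))"
  proof -
    have "{s\<in>?T. s \<le> t} = {1..t}" if "t \<in> ?T" for t
      using that by auto
    then show ?thesis by (auto simp: sum_distrib_left intro!: sum.cong)
  qed
  also have "(\<Sum>t\<in>?T. real t / real t ^ CARD('d)) \<le> 2 * g_d CARD('d) l"
    using sum_div_power_le_g_d [OF _ assms] finite_UNIV_card_ge_0 [where 'a = 'd] by simp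
  finally show ?thesis by simp
qed

lemma interp_flow_l1:
  fixes r :: "'d::finite \<Rightarrow> nat"
  assumes "l \<ge> 1"
  shows "(\<Sum>(z, b)\<in>Lam (2 * l - 1) \<times> UNIV. \<bar>interp_flow r l z b\<bar>)
    \<le> 12 * real CARD('d) * real l"
proof -
  let ?X = "Lam (2 * l - 1) \<times> (UNIV :: 'd set)"
  have "(\<Sum>(z, b)\<in>?X. \<bar>interp_flow r l z b\<bar>)
      \<le> (\<Sum>(z, b)\<in>?X. \<Sum>t\<in>{1..<l}. \<bar>step_flow r t z b\<bar>)"
    unfolding interp_flow_def by (intro sum_mono) (auto intro: sum_abs)
  also have "\<dots> = (\<Sum>t\<in>{1..<l}. \<Sum>(z, b)\<in>?X. \<bar>step_flow r t z b\<bar>)"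
    unfolding case_prod_beta by (rule sum.swap)
  also have "\<dots> \<le> (\<Sum>t\<in>{1..<l}. 12 * real CARD('d))"
    by (intro sum_mono sum_abs_step_flow_pairs_le) auto
  also have "\<dots> \<le> 12 * real CARD('d) * real l"
    by simp
  finally show ?thesis .
qed

theorem lemma3p2:
  shows "\<exists>C::real. \<forall>l::nat. l \<ge> 1 \<longrightarrow>
    (\<exists>\<phi> :: int ^ 'd::finite \<Rightarrow> 'd \<Rightarrow> real.
       flow_connects \<phi> point_mass (qconv l) \<and>
       flow_supported_in \<phi> (Lam (2 * l - 1)) \<and>
       (\<Sum>(z, b) \<in> Lam (2 * l - 1) \<times> UNIV. (\<phi> z b)\<^sup>2) \<le> C * g_d CARD('d) l \<and>
       (\<Sum>(z, b) \<in> Lam (2 * l - 1) \<times> UNIV. \<bar>\<phi> z b\<bar>) \<le> C * real l)"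
proof -
  obtain r :: "'d \<Rightarrow> nat" where r: "inj r"
    using finite_imp_inj_to_nat_seg [of "UNIV :: 'd set"] by auto
  have "l \<ge> 1 \<Longrightarrow> (\<Sum>(z, b)\<in>Lam (2 * l - 1) \<times> UNIV. \<bar>interp_flow r l z b\<bar>)
      \<le> 288 * real CARD('d) * real l" for l
    by (rule order_trans [OF interp_flow_l1]) simp_all
  then show ?thesis
    using interp_flow_connects [OF r] interp_flow_supported interp_flow_energy
    by (intro exI [of _ "288 * real CARD('d)"]) blast
qed

end
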